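(* Let $X\subseteq Y$ with $|X|\le|Y\setminus X|$. Then the map $\pi:S_\infty(Y)\to(I(X),\tau_{pp})$, $\pi(f)=\widehat f$, is continuous, onto and open, where $S_\infty(Y)$ carries the topology of pointwise convergence (the product topology inherited from $Y^Y$, $Y$ discrete).
   Context: $S_\infty(Y)$ is the group of all bijections $Y\to Y$. $I(X)$ is the set of all bijections $f:A\to B$ with $A,B\subseteq X$ (including the empty map), $\mathrm{dom}(f)=A$, $\mathrm{im}(f)=B$. For $f\in S_\infty(Y)$, $\widehat f=\{(x,f(x)): x\in X,\ f(x)\in X\}$, the restriction of $f$ to $X\cap f^{-1}(X)$. For $x,y\in X$: $v(x,y)=\{f\in I(X): x\in\mathrm{dom}(f), f(x)=y\}$, $w_1(x)=\{f: x\notin\mathrm{dom}(f)\}$, $w_2(y)=\{f: y\notin\mathrm{im}(f)\}$; $\tau_{pp}$ is the topology on $I(X)$ generated by the subbasis of all these sets. *)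

theory Defs
  imports "HOL-Analysis.Analysis" "HOL-Library.Equipollence"
begin

text \<open>S_infinity(Y): all bijections of Y, represented as extensional functions
  (value undefined outside Y), i.e. the points of the product space Y^Y.\<close>
definition Sinf :: "'a set \<Rightarrow> ('a \<Rightarrow> 'a) set" where
  "Sinf Y = {f. f \<in> extensional Y \<and> bij_betw f Y Y}"

definition Sinf_top :: "'a set \<Rightarrow> ('a \<Rightarrow> 'a) topology" where
  "Sinf_top Y = subtopology (product_topology (\<lambda>_. discrete_topology Y) Y) (Sinf Y)"

definition pinj :: "'a set \<Rightarrow> ('a \<rightharpoonup> 'a) set" where
  "pinj X = {f. dom f \<subseteq> X \<and> ran f \<subseteq> X \<and> inj_on f (dom f)}"

definition vset :: "'a set \<Rightarrow> 'a \<Rightarrow> 'a \<Rightarrow> ('a \<rightharpoonup> 'a) set" where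
  "vset X x y = {f \<in> pinj X. x \<in> dom f \<and> f x = Some y}"

definition w1set :: "'a set \<Rightarrow> 'a \<Rightarrow> ('a \<rightharpoonup> 'a) set" where
  "w1set X x = {f \<in> pinj X. x \<notin> dom f}"

definition w2set :: "'a set \<Rightarrow> 'a \<Rightarrow> ('a \<rightharpoonup> 'a) set" where
  "w2set X y = {f \<in> pinj X. y \<notin> ran f}"

text \<open>tau_pp: topology on I(X) generated by the subbasis of all v(x,y), w1(x), w2(y)
  (x, y in X); the whole space I(X) is added so that it is open even when X is empty.\<close>
definition tau_pp :: "'a set \<Rightarrow> ('a \<rightharpoonup> 'a) topology" where
  "tau_pp X = topology_generated_by
     (insert (pinj X)
       ({vset X x y | x y. x \<in> X \<and> y \<in> X} \<union> {w1set X x | x. x \<in> X} \<union> {w2set X y | y. y \<in> X}))"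

definition hat :: "'a set \<Rightarrow> ('a \<Rightarrow> 'a) \<Rightarrow> ('a \<rightharpoonup> 'a)" where
  "hat X f = (\<lambda>x. if x \<in> X \<and> f x \<in> X then Some (f x) else None)"

end

theory Submission
  imports Defs
begin

text \<open>Fix an injection \<open>h\<close> of \<open>M\<close> into \<open>Y - M\<close>. Then every partial bijection \<open>P\<close> between
  subsets of \<open>M\<close> extends to a permutation of \<open>Y\<close> that sends \<open>M - dom P\<close> out of \<open>M\<close>;
  with \<open>M = X\<close> its restriction \<open>hat X\<close> is the given partial bijection, whence surjectivity.
  Continuity holds because every subbasic set of \<open>\<tau>\<^sub>p\<^sub>p\<close> pulls back to a union of sets
  \<open>{f. f x \<in> B}\<close>. For openness, a basic neighbourhood of \<open>f\<close> prescribes \<open>f\<close> on a finite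
  \<open>F \<subseteq> Y\<close>, and its image contains the \<open>\<tau>\<^sub>p\<^sub>p\<close>-neighbourhood of \<open>hat X f\<close> recording how \<open>f\<close>
  moves the points of \<open>F\<close> relative to \<open>X\<close>: if \<open>X\<close> is finite one takes all of \<open>X\<close> instead
  of \<open>F\<close> and the neighbourhood is a point; if \<open>X\<close> is infinite, \<open>M = X \<union> F \<union> f ` F\<close> still
  satisfies \<open>M \<lesssim> Y - M\<close>, and extending each \<open>q\<close> of the neighbourhood glued with \<open>f\<close> on \<open>F\<close>
  yields a permutation in the basic neighbourhood whose restriction is \<open>q\<close>.\<close>

lemma Sinf_bij_betw: "f \<in> Sinf Y \<Longrightarrow> bij_betw f Y Y"
  by (simp add: Sinf_def)

lemma Sinf_mem: "f \<in> Sinf Y \<Longrightarrow> x \<in> Y \<Longrightarrow> f x \<in> Y"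
  using Sinf_bij_betw bij_betwE by blast

lemma Sinf_inj_on: "f \<in> Sinf Y \<Longrightarrow> inj_on f Y"
  using Sinf_bij_betw bij_betw_imp_inj_on by blast

lemma infinite_Un_finite_eqpoll:
  assumes "infinite A" "finite G"
  shows "A \<union> G \<approx> A"
  using assms(2)
proof (induction G rule: finite_induct)
  case (insert a G)
  have "A \<union> insert a G = insert a (A \<union> G)" by blast
  also have "\<dots> \<approx> A \<union> G" by (rule infinite_insert_eqpoll) (use assms(1) in simp)
  also have "\<dots> \<approx> A" by (rule insert.IH)
  finally show ?case .
qed simp

lemma infinite_Diff_finite_eqpoll:
  assumes "infinite A" "finite G"
  shows "A - G \<approx> A"
  using assms(2)
proof (induction G rule: finite_induct)
  case (insert a G)
  show ?case
  proof (cases "a \<in> A - G")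
    case True
    have "A - insert a G \<approx> insert a (A - insert a G)"
      by (rule eqpoll_sym, rule infinite_insert_eqpoll) (use assms insert.hyps(1) in simp)
    also have "insert a (A - insert a G) = A - G" using True by blast
    also have "\<dots> \<approx> A" by (rule insert.IH)
    finally show ?thesis .
  next
    case False
    then have "A - insert a G = A - G" by blast
    with insert.IH show ?thesis by simp
  qed
qed simp

lemma lepoll_complement_Un_finite:
  assumes "infinite X" "X \<lesssim> Y - X" "finite G"
  shows "X \<union> G \<lesssim> Y - (X \<union> G)"
proof -
  have "infinite (Y - X)"
    using assms(1,2) unfolding lepoll_iff by (metis finite_subset finite_imageI)
  have "X \<union> G \<approx> X" by (rule infinite_Un_finite_eqpoll[OF assms(1,3)])
  also have "X \<lesssim> Y - X" by (rule assms(2))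
  also have "Y - X \<approx> (Y - X) - G"
    by (rule eqpoll_sym, rule infinite_Diff_finite_eqpoll) (use \<open>infinite (Y - X)\<close> assms(3) in simp_all)
  also have "(Y - X) - G = Y - (X \<union> G)" by blast
  finally show ?thesis .
qed

lemma partial_bijection_extends_to_Sinf:
  assumes inj: "inj_on P D" and DM: "D \<subseteq> M" and "P ` D \<subseteq> M" and MY: "M \<subseteq> Y"
    and "M \<lesssim> Y - M"
  obtains k where "k \<in> Sinf Y" "\<forall>x\<in>D. k x = P x" "k ` (M - D) \<subseteq> Y - M"
proof -
  obtain h where h: "inj_on h M" "h ` M \<subseteq> Y - M"
    using \<open>M \<lesssim> Y - M\<close> unfolding lepoll_def by blast
  define R where "R = P ` D"
  define Z where "Z = Y - (M \<union> h ` M)"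
  have RM: "R \<subseteq> M" using \<open>P ` D \<subseteq> M\<close> by (simp add: R_def)
  have hM: "bij_betw h M (h ` M)" using h(1) by (simp add: bij_betw_imageI)
  have PD: "bij_betw P D R" using inj by (simp add: R_def bij_betw_imageI)
  text \<open>The pieces \<open>D\<close>, \<open>M - D\<close>, \<open>h ` (M - R)\<close>, \<open>h ` R\<close>, \<open>Z\<close> of \<open>Y\<close> are sent
    bijectively onto \<open>R\<close>, \<open>h ` (M - D)\<close>, \<open>M - R\<close>, \<open>h ` D\<close>, \<open>Z\<close>.\<close>
  define k where "k x = (if x \<in> D then P x else if x \<in> M - D then h x
      else if x \<in> h ` (M - R) then inv_into M h x
      else if x \<in> h ` R then h (inv_into D P (inv_into M h x))
      else if x \<in> Y then x else undefined)" for x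
  have "bij_betw (\<lambda>x. h (inv_into D P (inv_into M h x))) (h ` R) (h ` D)"
  proof -
    have "bij_betw (inv_into M h) (h ` R) R" by (rule bij_betw_inv_into_subset[OF hM RM]) simp
    moreover have "bij_betw (inv_into D P) R D" by (rule bij_betw_inv_into[OF PD])
    moreover have "bij_betw h D (h ` D)" by (rule bij_betw_subset[OF hM DM]) simp
    ultimately have "bij_betw (h \<circ> inv_into D P \<circ> inv_into M h) (h ` R) (h ` D)"
      by (intro bij_betw_trans)
    then show ?thesis by (simp add: comp_def)
  qed
  moreover have "bij_betw h (M - D) (h ` (M - D))" by (rule bij_betw_subset[OF hM]) auto
  moreover have "bij_betw (inv_into M h) (h ` (M - R)) (M - R)"
    by (rule bij_betw_inv_into_subset[OF hM]) auto
  moreover have "bij_betw (\<lambda>x. if x \<in> Y then x else undefined) Z Z"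
    by (simp add: bij_betw_def inj_on_def Z_def image_def)
  moreover have "\<forall>x\<in>M. h x \<notin> M \<and> h x \<notin> Z" "Z \<inter> M = {}" using h(2) Z_def by blast+
  moreover have "h ` (M - R) \<inter> h ` R = {}" "h ` (M - D) \<inter> h ` D = {}"
    using h(1) DM RM by (auto dest: inj_onD)
  ultimately have "bij_betw k (D \<union> ((M - D) \<union> (h ` (M - R) \<union> (h ` R \<union> Z))))
      (R \<union> (h ` (M - D) \<union> ((M - R) \<union> (h ` D \<union> Z))))"
    unfolding k_def using PD DM RM by (intro bij_betw_disjoint_Un) auto
  moreover have "D \<union> ((M - D) \<union> (h ` (M - R) \<union> (h ` R \<union> Z))) = Y"
    "R \<union> (h ` (M - D) \<union> ((M - R) \<union> (h ` D \<union> Z))) = Y"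
    using h(2) DM RM MY unfolding Z_def by blast+
  moreover have "k \<in> extensional Y"
    using h(2) DM RM MY unfolding k_def extensional_def by auto
  ultimately have "k \<in> Sinf Y" by (simp add: Sinf_def)
  moreover have "k ` (M - D) \<subseteq> Y - M" using h(2) by (auto simp: k_def)
  ultimately show ?thesis by (intro that[of k]) (auto simp: k_def)
qed

lemma topspace_Sinf_top: "topspace (Sinf_top Y) = Sinf Y"
proof -
  have "Sinf Y \<subseteq> (\<Pi>\<^sub>E i\<in>Y. Y)"
    by (auto simp: Sinf_def PiE_iff extensional_def dest: bij_betwE)
  then show ?thesis by (auto simp: Sinf_top_def)
qed

lemma openin_Sinf_top_eval:
  assumes "x \<in> Y" "B \<subseteq> Y"
  shows "openin (Sinf_top Y) {f \<in> Sinf Y. f x \<in> B}"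
proof -
  have "continuous_map (Sinf_top Y) (discrete_topology Y) (\<lambda>f. f x)"
    unfolding Sinf_top_def
    by (intro continuous_map_from_subtopology continuous_map_product_projection assms(1))
  then show ?thesis
    using openin_continuous_map_preimage assms(2) by (fastforce simp: topspace_Sinf_top)
qed

lemma openin_Sinf_top_eval_eq:
  "x \<in> Y \<Longrightarrow> y \<in> Y \<Longrightarrow> openin (Sinf_top Y) {f \<in> Sinf Y. f x = y}"
  using openin_Sinf_top_eval[of x Y "{y}"] by simp

definition Sinf_basic_nbhd :: "'a set \<Rightarrow> ('a \<Rightarrow> 'a) \<Rightarrow> 'a set \<Rightarrow> ('a \<Rightarrow> 'a) set" where
  "Sinf_basic_nbhd Y f F = {k \<in> Sinf Y. \<forall>i\<in>F. k i = f i}"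

lemma openin_Sinf_top_contains_basic_nbhd:
  assumes "openin (Sinf_top Y) U" "f \<in> U"
  obtains F where "finite F" "F \<subseteq> Y" "Sinf_basic_nbhd Y f F \<subseteq> U"
proof -
  obtain T where T: "openin (product_topology (\<lambda>_. discrete_topology Y) Y) T" "U = T \<inter> Sinf Y"
    using assms(1) unfolding Sinf_top_def openin_subtopology by blast
  then obtain B where B: "f \<in> (\<Pi>\<^sub>E i\<in>Y. B i)" "finite {i. B i \<noteq> Y}" "(\<Pi>\<^sub>E i\<in>Y. B i) \<subseteq> T"
    using product_topology_open_contains_basis[OF T(1)] assms(2) by force
  have "Sinf_basic_nbhd Y f {i \<in> Y. B i \<noteq> Y} \<subseteq> U"
  proof
    fix k assume k: "k \<in> Sinf_basic_nbhd Y f {i \<in> Y. B i \<noteq> Y}"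
    then have "k \<in> (\<Pi>\<^sub>E i\<in>Y. B i)"
      using B(1) Sinf_mem[of k Y] by (auto simp: PiE_iff Sinf_def Sinf_basic_nbhd_def)
    then show "k \<in> U" using k B(3) T(2) by (auto simp: Sinf_basic_nbhd_def)
  qed
  moreover have "finite {i \<in> Y. B i \<noteq> Y}" by (rule finite_subset[OF _ B(2)]) blast
  ultimately show ?thesis by (intro that) auto
qed

lemma hat_in_pinj: "inj_on f X \<Longrightarrow> hat X f \<in> pinj X"
  by (auto simp: pinj_def hat_def dom_def ran_def inj_on_def split: if_splits)

lemma hat_in_vset_iff:
  "inj_on f X \<Longrightarrow> x \<in> X \<Longrightarrow> y \<in> X \<Longrightarrow> hat X f \<in> vset X x y \<longleftrightarrow> f x = y"
  by (simp add: vset_def hat_in_pinj) (auto simp: hat_def)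

lemma hat_in_w1set_iff:
  "inj_on f X \<Longrightarrow> x \<in> X \<Longrightarrow> hat X f \<in> w1set X x \<longleftrightarrow> f x \<notin> X"
  by (simp add: w1set_def hat_in_pinj) (auto simp: hat_def split: if_splits)

lemma hat_in_w2set_iff:
  "inj_on f X \<Longrightarrow> y \<in> X \<Longrightarrow> hat X f \<in> w2set X y \<longleftrightarrow> y \<notin> f ` X"
  by (simp add: w2set_def hat_in_pinj) (auto simp: hat_def ran_def split: if_splits)

lemma inj_on_the_dom: "inj_on q (dom q) \<Longrightarrow> inj_on (\<lambda>x. the (q x)) (dom q)"
  by (rule inj_onI) (metis domIff inj_onD option.expand)

lemma hat_eq_if_extends:
  assumes "q \<in> pinj X" "\<forall>x\<in>dom q. q x = Some (k x)" "\<forall>x\<in>X - dom q. k x \<notin> X"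
  shows "hat X k = q"
proof
  fix x
  show "hat X k x = q x"
  proof (cases "x \<in> dom q")
    case True
    then have "k x \<in> ran q" "x \<in> X" using assms(1,2) by (auto simp: pinj_def ran_def)
    then show ?thesis using True assms(1,2) by (auto simp: hat_def pinj_def)
  next
    case False
    then show ?thesis using assms(1,3) by (auto simp: hat_def pinj_def)
  qed
qed

definition pp_subbasis :: "'a set \<Rightarrow> ('a \<rightharpoonup> 'a) set set" where
  "pp_subbasis X = insert (pinj X)
     ({vset X x y | x y. x \<in> X \<and> y \<in> X} \<union> {w1set X x | x. x \<in> X} \<union> {w2set X y | y. y \<in> X})"

lemma tau_pp_eq_generated: "tau_pp X = topology_generated_by (pp_subbasis X)"
  by (simp add: tau_pp_def pp_subbasis_def)

lemma openin_tau_pp_subbasis: "U \<in> pp_subbasis X \<Longrightarrow> openin (tau_pp X) U"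
  by (simp add: tau_pp_eq_generated topology_generated_by_Basis)

lemma pp_subbasis_subset_pinj: "U \<in> pp_subbasis X \<Longrightarrow> U \<subseteq> pinj X"
  unfolding pp_subbasis_def vset_def w1set_def w2set_def by blast

lemma continuous_map_hat:
  assumes "X \<subseteq> Y"
  shows "continuous_map (Sinf_top Y) (tau_pp X) (hat X)"
  unfolding tau_pp_eq_generated
proof (rule continuous_on_generated_topo)
  have inj: "inj_on f X" if "f \<in> Sinf Y" for f
    using Sinf_inj_on[OF that] assms by (rule inj_on_subset)
  show "hat X ` topspace (Sinf_top Y) \<subseteq> \<Union> (pp_subbasis X)"
    using hat_in_pinj[OF inj] by (auto simp: topspace_Sinf_top pp_subbasis_def)
  fix U assume "U \<in> pp_subbasis X"
  then consider "U = pinj X" | x y where "x \<in> X" "y \<in> X" "U = vset X x y"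
    | x where "x \<in> X" "U = w1set X x" | y where "y \<in> X" "U = w2set X y"
    unfolding pp_subbasis_def by auto
  then show "openin (Sinf_top Y) (hat X -` U \<inter> topspace (Sinf_top Y))"
  proof cases
    case 1
    then have "hat X -` U \<inter> topspace (Sinf_top Y) = topspace (Sinf_top Y)"
      using hat_in_pinj[OF inj] by (auto simp: topspace_Sinf_top)
    then show ?thesis by simp
  next
    case (2 x y)
    then have "hat X -` U \<inter> topspace (Sinf_top Y) = {f \<in> Sinf Y. f x = y}"
      using hat_in_vset_iff[OF inj] by (auto simp: topspace_Sinf_top)
    moreover have "openin (Sinf_top Y) {f \<in> Sinf Y. f x = y}"
      using 2 assms by (intro openin_Sinf_top_eval_eq) auto
    ultimately show ?thesis by simp
  next
    case (3 x)
    then have "hat X -` U \<inter> topspace (Sinf_top Y) = {f \<in> Sinf Y. f x \<in> Y - X}"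
      using hat_in_w1set_iff[OF inj] Sinf_mem[of _ Y x] assms by (auto simp: topspace_Sinf_top)
    moreover have "openin (Sinf_top Y) {f \<in> Sinf Y. f x \<in> Y - X}"
      using 3 assms by (intro openin_Sinf_top_eval) auto
    ultimately show ?thesis by simp
  next
    case (4 y)
    have "y \<notin> f ` X \<longleftrightarrow> (\<exists>z\<in>Y - X. f z = y)" if "f \<in> Sinf Y" for f
    proof -
      have "inj_on f Y" "f ` Y = Y" using Sinf_bij_betw[OF that] by (auto simp: bij_betw_def)
      moreover have "y \<in> f ` Y \<longleftrightarrow> y \<in> f ` X \<or> (\<exists>z\<in>Y - X. f z = y)"
        using assms by blast
      ultimately show ?thesis using assms 4(1) by (auto dest: inj_onD)
    qed
    then have "hat X -` U \<inter> topspace (Sinf_top Y) = (\<Union>z\<in>Y - X. {f \<in> Sinf Y. f z = y})"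
      using hat_in_w2set_iff[OF inj] 4 by (auto simp: topspace_Sinf_top)
    moreover have "openin (Sinf_top Y) (\<Union>z\<in>Y - X. {f \<in> Sinf Y. f z = y})"
      using 4 assms by (intro openin_Union) (auto intro: openin_Sinf_top_eval_eq)
    ultimately show ?thesis by simp
  qed
qed

lemma hat_image_Sinf:
  assumes "X \<subseteq> Y" "X \<lesssim> Y - X"
  shows "hat X ` Sinf Y = pinj X"
proof
  show "hat X ` Sinf Y \<subseteq> pinj X"
    using hat_in_pinj inj_on_subset[OF Sinf_inj_on assms(1)] by blast
  show "pinj X \<subseteq> hat X ` Sinf Y"
  proof
    fix q assume q: "q \<in> pinj X"
    then have "inj_on (\<lambda>x. the (q x)) (dom q)"
      by (intro inj_on_the_dom) (simp add: pinj_def)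
    moreover have "dom q \<subseteq> X" "(\<lambda>x. the (q x)) ` dom q \<subseteq> X"
      using q by (auto simp: pinj_def ran_def)
    ultimately obtain k where k: "k \<in> Sinf Y" "\<forall>x\<in>dom q. k x = the (q x)" "k ` (X - dom q) \<subseteq> Y - X"
      by (rule partial_bijection_extends_to_Sinf[OF _ _ _ assms])
    then have "hat X k = q" using q by (intro hat_eq_if_extends) auto
    then show "q \<in> hat X ` Sinf Y" using k(1) by blast
  qed
qed

definition hat_subbasic :: "'a set \<Rightarrow> ('a \<Rightarrow> 'a) \<Rightarrow> 'a \<Rightarrow> ('a \<rightharpoonup> 'a) set" where
  "hat_subbasic X f x =
     (if x \<in> X then (if f x \<in> X then vset X x (f x) else w1set X x)
      else if f x \<in> X then w2set X (f x) else pinj X)"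

definition hat_nbhd :: "'a set \<Rightarrow> ('a \<Rightarrow> 'a) \<Rightarrow> 'a set \<Rightarrow> ('a \<rightharpoonup> 'a) set" where
  "hat_nbhd X f S = {q \<in> pinj X. \<forall>x\<in>S. q \<in> hat_subbasic X f x}"

lemma hat_subbasic_in_pp_subbasis: "hat_subbasic X f x \<in> pp_subbasis X"
  by (auto simp: hat_subbasic_def pp_subbasis_def)

lemma openin_hat_nbhd:
  assumes "finite S"
  shows "openin (tau_pp X) (hat_nbhd X f S)"
  using assms
proof (induction S rule: finite_induct)
  case empty
  have "pinj X \<in> pp_subbasis X" by (simp add: pp_subbasis_def)
  then show ?case by (simp add: hat_nbhd_def openin_tau_pp_subbasis)
next
  case (insert a S)
  have "hat_nbhd X f (insert a S) = hat_nbhd X f S \<inter> hat_subbasic X f a"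
    using pp_subbasis_subset_pinj[OF hat_subbasic_in_pp_subbasis] by (auto simp: hat_nbhd_def)
  then show ?case
    using openin_Int[OF insert.IH openin_tau_pp_subbasis[OF hat_subbasic_in_pp_subbasis]] by simp
qed

lemma hat_in_hat_nbhd:
  assumes "f \<in> Sinf Y" "X \<subseteq> Y" "S \<subseteq> Y"
  shows "hat X f \<in> hat_nbhd X f S"
proof -
  have inj: "inj_on f X" using inj_on_subset[OF Sinf_inj_on[OF assms(1)] assms(2)] .
  have "hat X f \<in> hat_subbasic X f x" if "x \<in> S" for x
  proof -
    have "x \<in> Y" using that assms(3) by blast
    have "f x \<notin> f ` X" if "x \<notin> X"
      using Sinf_inj_on[OF assms(1)] \<open>x \<in> Y\<close> that assms(2) by (auto dest: inj_onD)
    then show ?thesis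
      using hat_in_vset_iff[OF inj] hat_in_w1set_iff[OF inj] hat_in_w2set_iff[OF inj] hat_in_pinj[OF inj]
      by (simp add: hat_subbasic_def)
  qed
  then show ?thesis using hat_in_pinj[OF inj] by (simp add: hat_nbhd_def)
qed

lemma hat_nbhd_pinj: "q \<in> hat_nbhd X f S \<Longrightarrow> q \<in> pinj X"
  by (simp add: hat_nbhd_def)

lemma hat_nbhdD:
  assumes "q \<in> hat_nbhd X f S" "x \<in> S"
  shows "x \<in> X \<Longrightarrow> f x \<in> X \<Longrightarrow> q x = Some (f x)"
    and "x \<in> X \<Longrightarrow> f x \<notin> X \<Longrightarrow> q x = None"
    and "x \<notin> X \<Longrightarrow> f x \<in> X \<Longrightarrow> f x \<notin> ran q"
proof -
  have "q \<in> hat_subbasic X f x" using assms by (simp add: hat_nbhd_def)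
  then show "x \<in> X \<Longrightarrow> f x \<in> X \<Longrightarrow> q x = Some (f x)"
    and "x \<in> X \<Longrightarrow> f x \<notin> X \<Longrightarrow> q x = None"
    and "x \<notin> X \<Longrightarrow> f x \<in> X \<Longrightarrow> f x \<notin> ran q"
    by (simp_all add: hat_subbasic_def vset_def w1set_def w2set_def domIff)
qed

lemma hat_nbhd_all_subset_singleton: "hat_nbhd X f X \<subseteq> {hat X f}"
proof
  fix q assume q: "q \<in> hat_nbhd X f X"
  have "q x = hat X f x" for x
  proof (cases "x \<in> X")
    case False
    then have "x \<notin> dom q" using hat_nbhd_pinj[OF q] unfolding pinj_def by blast
    then show ?thesis using False by (simp add: hat_def domIff)
  next
    case True
    show ?thesis
      using hat_nbhdD(1,2)[OF q True True] True by (cases "f x \<in> X") (simp_all add: hat_def)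
  qed
  then show "q \<in> {hat X f}" by (simp add: fun_eq_iff)
qed

lemma hat_nbhd_agrees:
  assumes "q \<in> hat_nbhd X f F" "x \<in> F" "x \<in> dom q"
  shows "q x = Some (f x)"
proof -
  have "x \<in> X" using hat_nbhd_pinj[OF assms(1)] assms(3) unfolding pinj_def by blast
  then show ?thesis using hat_nbhdD(1,2)[OF assms(1,2)] assms(3) by (cases "f x \<in> X") auto
qed

lemma inj_on_glue_hat_nbhd:
  assumes inj: "inj_on f F" and q: "q \<in> hat_nbhd X f F"
  shows "inj_on (\<lambda>x. if x \<in> F then f x else the (q x)) (dom q \<union> F)"
proof -
  have injq: "inj_on (\<lambda>x. the (q x)) (dom q)"
    using hat_nbhd_pinj[OF q] by (intro inj_on_the_dom) (simp add: pinj_def)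
  have mixed: "x = z" if "x \<in> F" "z \<in> dom q" "f x = the (q z)" for x z
  proof -
    have "f x \<in> ran q" using that(2,3) by (auto simp: ran_def)
    then have "f x \<in> X" using hat_nbhd_pinj[OF q] unfolding pinj_def by blast
    moreover have "x \<in> X" using hat_nbhdD(3)[OF q that(1)] \<open>f x \<in> ran q\<close> calculation by blast
    ultimately have "x \<in> dom q" "the (q x) = f x" using hat_nbhdD(1)[OF q that(1)] by auto
    then show ?thesis using that(2,3) injq by (auto dest: inj_onD)
  qed
  show ?thesis
  proof (rule inj_onI)
    fix x z assume "x \<in> dom q \<union> F" "z \<in> dom q \<union> F"
      and eq: "(if x \<in> F then f x else the (q x)) = (if z \<in> F then f z else the (q z))"
    then consider "x \<in> F" "z \<in> F" | "x \<in> F" "z \<in> dom q - F" | "x \<in> dom q - F" "z \<in> F"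
      | "x \<in> dom q - F" "z \<in> dom q - F" by blast
    then show "x = z"
    proof cases
      case 1 then show ?thesis using eq inj by (auto dest: inj_onD)
    next
      case 2 then show ?thesis using eq mixed[of x z] mixed[of z x] by (auto split: if_splits)
    next
      case 3 then show ?thesis using eq mixed[of x z] mixed[of z x] by (auto split: if_splits)
    next
      case 4 then show ?thesis using eq injq by (auto dest: inj_onD)
    qed
  qed
qed

lemma hat_nbhd_subset_hat_image:
  assumes f: "f \<in> Sinf Y" and "X \<subseteq> Y" "X \<lesssim> Y - X" "infinite X" "finite F" "F \<subseteq> Y"
  shows "hat_nbhd X f F \<subseteq> hat X ` Sinf_basic_nbhd Y f F"
proof
  fix q assume q: "q \<in> hat_nbhd X f F"
  have dom_ran: "dom q \<subseteq> X" "ran q \<subseteq> X" using hat_nbhd_pinj[OF q] by (simp_all add: pinj_def)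
  define P where "P x = (if x \<in> F then f x else the (q x))" for x
  define M where "M = X \<union> (F \<union> f ` F)"
  have "inj_on P (dom q \<union> F)"
    unfolding P_def using inj_on_subset[OF Sinf_inj_on[OF f] \<open>F \<subseteq> Y\<close>] q
    by (rule inj_on_glue_hat_nbhd)
  moreover have "dom q \<union> F \<subseteq> M" "P ` (dom q \<union> F) \<subseteq> M"
    using dom_ran by (auto simp: M_def P_def ran_def)
  moreover have "M \<subseteq> Y" using assms(2,6) Sinf_mem[OF f] by (auto simp: M_def)
  moreover have "M \<lesssim> Y - M"
    unfolding M_def using assms(3-5) by (intro lepoll_complement_Un_finite) auto
  ultimately obtain k where k: "k \<in> Sinf Y" "\<forall>x\<in>dom q \<union> F. k x = P x" "k ` (M - (dom q \<union> F)) \<subseteq> Y - M"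
    by (rule partial_bijection_extends_to_Sinf)
  have kF: "\<forall>i\<in>F. k i = f i" using k(2) by (simp add: P_def)
  have "\<forall>x\<in>dom q. q x = Some (k x)"
    using k(2) hat_nbhd_agrees[OF q] by (auto simp: P_def)
  moreover have "\<forall>x\<in>X - dom q. k x \<notin> X"
  proof
    fix x assume x: "x \<in> X - dom q"
    show "k x \<notin> X"
    proof (cases "x \<in> F")
      case True
      then show ?thesis using hat_nbhdD(1)[OF q True] x kF by auto
    next
      case False
      then show ?thesis using x k(3) by (auto simp: M_def)
    qed
  qed
  ultimately have "hat X k = q" using hat_nbhd_pinj[OF q] by (intro hat_eq_if_extends)
  then show "q \<in> hat X ` Sinf_basic_nbhd Y f F" using k(1) kF by (auto simp: Sinf_basic_nbhd_def)
qed

lemma hat_image_Sinf_basic_nbhd_nbhd: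
  assumes "f \<in> Sinf Y" "X \<subseteq> Y" "X \<lesssim> Y - X" "finite F" "F \<subseteq> Y"
  obtains V where "openin (tau_pp X) V" "hat X f \<in> V"
    "V \<subseteq> hat X ` Sinf_basic_nbhd Y f F"
proof (cases "finite X")
  case True
  show ?thesis
  proof (rule that)
    show "openin (tau_pp X) (hat_nbhd X f X)" using True by (rule openin_hat_nbhd)
    show "hat X f \<in> hat_nbhd X f X" using assms(1,2,2) by (rule hat_in_hat_nbhd)
    show "hat_nbhd X f X \<subseteq> hat X ` Sinf_basic_nbhd Y f F"
      using hat_nbhd_all_subset_singleton assms(1) by (auto simp: Sinf_basic_nbhd_def)
  qed
next
  case False
  show ?thesis
  proof (rule that)
    show "openin (tau_pp X) (hat_nbhd X f F)" using assms(4) by (rule openin_hat_nbhd)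
    show "hat X f \<in> hat_nbhd X f F" using assms(1,2,5) by (rule hat_in_hat_nbhd)
    show "hat_nbhd X f F \<subseteq> hat X ` Sinf_basic_nbhd Y f F"
      using assms False by (intro hat_nbhd_subset_hat_image)
  qed
qed

lemma open_map_hat:
  assumes "X \<subseteq> Y" "X \<lesssim> Y - X"
  shows "open_map (Sinf_top Y) (tau_pp X) (hat X)"
  unfolding open_map_def
proof (intro allI impI)
  fix U assume U: "openin (Sinf_top Y) U"
  show "openin (tau_pp X) (hat X ` U)"
  proof (subst openin_subopen, intro ballI)
    fix q assume "q \<in> hat X ` U"
    then obtain f where f: "f \<in> U" "q = hat X f" by blast
    then have "f \<in> Sinf Y" using openin_subset[OF U] by (auto simp: topspace_Sinf_top)
    obtain F where F: "finite F" "F \<subseteq> Y" "Sinf_basic_nbhd Y f F \<subseteq> U"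
      using openin_Sinf_top_contains_basic_nbhd[OF U f(1)] .
    obtain V where V: "openin (tau_pp X) V" "hat X f \<in> V"
      "V \<subseteq> hat X ` Sinf_basic_nbhd Y f F"
      using hat_image_Sinf_basic_nbhd_nbhd[OF \<open>f \<in> Sinf Y\<close> assms F(1,2)] .
    moreover have "V \<subseteq> hat X ` U" using V(3) F(3) by (meson image_mono subset_trans)
    ultimately show "\<exists>V. openin (tau_pp X) V \<and> q \<in> V \<and> V \<subseteq> hat X ` U"
      using f(2) by blast
  qed
qed

theorem proposition6p2:
  fixes X Y :: "'a set"
  assumes "X \<subseteq> Y"
    and "X \<lesssim> Y - X"
  shows "continuous_map (Sinf_top Y) (tau_pp X) (hat X)
       \<and> hat X ` Sinf Y = pinj X
       \<and> open_map (Sinf_top Y) (tau_pp X) (hat X)"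
  using continuous_map_hat[OF assms(1)] hat_image_Sinf[OF assms] open_map_hat[OF assms] by (intro conjI)

end
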